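(* Let $d\ge2$, $N\ge2$, $s\in\{1,\dots,N-1\}$ and $\mathbf{p}=(p_1,\dots,p_d)$ a probability vector with all $p_i>0$. For the generalized Ehrenfest urn model with these parameters started with all balls in urn $i$ (state $N\mathbf{e}_i$), for any $c>0$, $$\chi_{N\mathbf{e}_i}^2(l)\le e^{e^{-c}}-1\quad\text{for } l\ge\frac{\log(N(1-p_i)/p_i)+c}{-2\log(1-s/N)},$$ $$\chi_{N\mathbf{e}_i}^2(l)\ge e^{c}\quad\text{for } l\le\frac{\log(N(1-p_i)/p_i)-c}{-2\log(1-s/N)}.$$
   Context: $\mathcal{X}_N^d=\{\mathbf{x}\in\mathbb{N}_0^d:\sum_ix_i=N\}$; $\mathbf{e}_i$ is the $i$-th unit vector; $\mathcal{M}(\mathbf{x}\mid N,\mathbf{p})=\frac{N!}{x_1!\cdots x_d!}\prod_ip_i^{x_i}$. Generalized Ehrenfest urn model: $N$ indistinguishable balls in $d$ urns; at each step choose $s$ of the $N$ balls uniformly at random (without replacement) and redistribute each independently into urn $j$ with probability $p_j$; the state is the vector of urn counts, a Markov chain $K$ on $\mathcal{X}_N^d$ with stationary distribution $\pi=\mathcal{M}(\cdot\mid N,\mathbf{p})$. Chi-square distance: $\chi_{\mathbf{x}}^2(l)=\sum_{\mathbf{y}}\frac{[K^l(\mathbf{x},\mathbf{y})-\pi(\mathbf{y})]^2}{\pi(\mathbf{y})}$. *)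

theory Defs
  imports Complex_Main
begin

text \<open>States: vectors of urn counts, represented as functions nat => nat indexed by
  the urns 0..d-1 (zero outside), with total count N.\<close>
definition ehr_states :: "nat \<Rightarrow> nat \<Rightarrow> (nat \<Rightarrow> nat) set" where
  "ehr_states d N = {x. (\<forall>j\<ge>d. x j = 0) \<and> (\<Sum>j<d. x j) = N}"

definition multinom :: "nat \<Rightarrow> nat \<Rightarrow> (nat \<Rightarrow> real) \<Rightarrow> (nat \<Rightarrow> nat) \<Rightarrow> real" where
  "multinom d N p x = fact N / (\<Prod>j<d. fact (x j)) * (\<Prod>j<d. p j ^ x j)"

text \<open>One-step transition probability K(x,y): choose s of the N balls uniformly without
  replacement (k j balls from urn j, multivariate hypergeometric), then put each chosen
  ball independently into urn j with probability p j (multinomial); the new state is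
  y = x - k + (y - x + k).\<close>
definition ehr_K :: "nat \<Rightarrow> nat \<Rightarrow> nat \<Rightarrow> (nat \<Rightarrow> real) \<Rightarrow> (nat \<Rightarrow> nat) \<Rightarrow> (nat \<Rightarrow> nat) \<Rightarrow> real" where
  "ehr_K d N s p x y =
     (\<Sum>k\<in>ehr_states d s.
        if (\<forall>j<d. k j \<le> x j \<and> x j \<le> y j + k j)
        then (\<Prod>j<d. real (x j choose k j)) / real (N choose s)
             * multinom d s p (\<lambda>j. y j + k j - x j)
        else 0)"

fun ehr_Kpow :: "nat \<Rightarrow> nat \<Rightarrow> nat \<Rightarrow> (nat \<Rightarrow> real) \<Rightarrow> nat \<Rightarrow> (nat \<Rightarrow> nat) \<Rightarrow> (nat \<Rightarrow> nat) \<Rightarrow> real" where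
  "ehr_Kpow d N s p 0 x y = (if x = y then 1 else 0)"
| "ehr_Kpow d N s p (Suc l) x y =
     (\<Sum>z\<in>ehr_states d N. ehr_Kpow d N s p l x z * ehr_K d N s p z y)"

definition ehr_chi2 :: "nat \<Rightarrow> nat \<Rightarrow> nat \<Rightarrow> (nat \<Rightarrow> real) \<Rightarrow> (nat \<Rightarrow> nat) \<Rightarrow> nat \<Rightarrow> real" where
  "ehr_chi2 d N s p x l =
     (\<Sum>y\<in>ehr_states d N. (ehr_Kpow d N s p l x y - multinom d N p y)^2 / multinom d N p y)"

end

theory Submission
  imports Defs "HOL-Computational_Algebra.Polynomial"
begin

text \<open>
  Write \<open>q = p i\<close>. The functions \<open>\<psi>\<^sub>n(x) = [t\<^sup>n] (1 + (1 - q) t)\<^bsup>x i\<^esup> (1 - q t)\<^bsup>N - x i\<^esup>\<close>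
  are eigenfunctions of the kernel with eigenvalues \<open>\<beta>\<^sub>n = (N - n choose s) / (N choose s)\<close>:
  redistributing the \<open>s\<close> drawn balls averages \<open>\<psi>\<^sub>n\<close> against a binomial law, which leaves the
  generating polynomial unchanged because \<open>q (1 + (1 - q) t) + (1 - q) (1 - q t) = 1\<close>, and drawing them
  averages against a hypergeometric law, which is a Vandermonde convolution. The chain is reversible
  for the multinomial law \<open>\<pi>\<close>, so \<open>K\<^sup>l(N e\<^sub>i, y) / \<pi>(y) = K\<^sup>l(y, N e\<^sub>i) / q\<^sup>N\<close>, and expanding
  the indicator of \<open>N e\<^sub>i\<close> in the \<open>\<psi>\<^sub>n\<close> (evaluate the generating polynomial at \<open>t = 1/q\<close>) gives
  \<open>\<chi>\<^sup>2(l) = (\<Sum>n=1..N. (N choose n) r\<^sup>n \<beta>\<^sub>n\<^bsup>2l\<^esup>)\<close> with \<open>r = (1 - q) / q\<close>. Since \<open>\<beta>\<^sub>n \<le> \<beta>\<^sub>1\<^sup>n\<close>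
  and \<open>\<beta>\<^sub>1 = 1 - s/N\<close>, this lies between its first term \<open>N r \<beta>\<^sub>1\<^bsup>2l\<^esup>\<close> and
  \<open>(1 + r \<beta>\<^sub>1\<^bsup>2l\<^esup>)\<^sup>N - 1 \<le> exp (N r \<beta>\<^sub>1\<^bsup>2l\<^esup>) - 1\<close>; taking logarithms gives both cut-off bounds.
\<close>

section \<open>Compositions and the multinomial theorem\<close>

definition compositions :: "'a set \<Rightarrow> nat \<Rightarrow> ('a \<Rightarrow> nat) set" where
  "compositions J n = {y. (\<forall>j. j \<notin> J \<longrightarrow> y j = 0) \<and> (\<Sum>j\<in>J. y j) = n}"

lemma ehr_states_eq_compositions: "ehr_states d N = compositions {..<d} N"
  unfolding ehr_states_def compositions_def by auto

lemma compositions_outside: "y \<in> compositions J n \<Longrightarrow> j \<notin> J \<Longrightarrow> y j = 0"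
  unfolding compositions_def by auto

lemma compositions_empty: "compositions {} n = (if n = 0 then {\<lambda>_. 0} else {})"
  unfolding compositions_def by auto

lemma compositions_insert:
  assumes "finite J" "x \<notin> J"
  shows "compositions (insert x J) n =
    (\<lambda>(b, y). y(x := b)) ` (SIGMA b:{..n}. compositions J (n - b))"
proof (intro equalityI subsetI)
  fix y assume y: "y \<in> compositions (insert x J) n"
  have sum: "y x + (\<Sum>j\<in>J. y j) = n" using y assms unfolding compositions_def by auto
  have "(\<Sum>j\<in>J. (y(x := 0)) j) = (\<Sum>j\<in>J. y j)" using assms by (intro sum.cong) auto
  hence "(y x, y(x := 0)) \<in> (SIGMA b:{..n}. compositions J (n - b))"
    using y sum unfolding compositions_def by auto
  moreover have "y = (\<lambda>(b, y). y(x := b)) (y x, y(x := 0))" by simp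
  ultimately show "y \<in> (\<lambda>(b, y). y(x := b)) ` (SIGMA b:{..n}. compositions J (n - b))"
    by (rule rev_image_eqI)
next
  fix y assume "y \<in> (\<lambda>(b, y). y(x := b)) ` (SIGMA b:{..n}. compositions J (n - b))"
  then obtain b y' where "b \<le> n" "y' \<in> compositions J (n - b)" "y = y'(x := b)" by auto
  moreover have "(\<Sum>j\<in>J. y j) = (\<Sum>j\<in>J. y' j)" using assms \<open>y = y'(x := b)\<close> by (intro sum.cong) auto
  ultimately show "y \<in> compositions (insert x J) n" using assms unfolding compositions_def by auto
qed

lemma inj_on_compositions_insert:
  assumes "x \<notin> J"
  shows "inj_on (\<lambda>(b, y). y(x := b)) (SIGMA b:{..n}. compositions J (n - b))"
proof (rule inj_onI, clarify)
  fix b y b' y' assume y: "y \<in> compositions J (n - b)" and y': "y' \<in> compositions J (n - b')"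
    and eq: "y(x := b) = y'(x := b')"
  have "y j = y' j" for j
    using fun_cong[OF eq, of j] compositions_outside[OF y] compositions_outside[OF y'] assms
    by (cases "j = x") auto
  with fun_cong[OF eq, of x] show "b = b' \<and> y = y'" by auto
qed

lemma finite_compositions: "finite J \<Longrightarrow> finite (compositions J n)"
  by (induction J arbitrary: n rule: finite_induct) (simp_all add: compositions_empty compositions_insert)

lemma sum_compositions_insert:
  assumes "finite J" "x \<notin> J"
  shows "(\<Sum>y\<in>compositions (insert x J) n. F y) =
    (\<Sum>b\<le>n. \<Sum>y\<in>compositions J (n - b). F (y(x := b)))"
proof -
  have "(\<Sum>y\<in>compositions (insert x J) n. F y) =
      (\<Sum>(b, y)\<in>(SIGMA b:{..n}. compositions J (n - b)). F (y(x := b)))"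
    unfolding compositions_insert[OF assms]
    by (subst sum.reindex[OF inj_on_compositions_insert[OF assms(2)]]) (simp add: case_prod_unfold)
  also have "\<dots> = (\<Sum>b\<le>n. \<Sum>y\<in>compositions J (n - b). F (y(x := b)))"
    by (rule sum.Sigma[symmetric]) (auto simp: finite_compositions assms)
  finally show ?thesis .
qed

lemma prod_insert_fun_upd:
  assumes "finite J" "x \<notin> J"
  shows "(\<Prod>j\<in>insert x J. f j ((y(x := b)) j)) = f x b * (\<Prod>j\<in>J. f j (y j))"
proof -
  have "(\<Prod>j\<in>J. f j ((y(x := b)) j)) = (\<Prod>j\<in>J. f j (y j))"
    using assms by (intro prod.cong) auto
  thus ?thesis using assms by simp
qed

lemma multinomial_coeff_insert:
  fixes a :: "'a \<Rightarrow> 'b::field_char_0"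
  assumes "finite J" "x \<notin> J" "b \<le> n"
  shows "fact n / (\<Prod>j\<in>insert x J. fact ((y(x := b)) j)) * (\<Prod>j\<in>insert x J. a j ^ (y(x := b)) j)
    = of_nat (n choose b) * a x ^ b * (fact (n - b) / (\<Prod>j\<in>J. fact (y j)) * (\<Prod>j\<in>J. a j ^ y j))"
proof -
  have "(fact n :: 'b) = of_nat (n choose b) * fact b * fact (n - b)"
    using arg_cong[OF binomial_fact_lemma[OF assms(3)], of "of_nat :: nat \<Rightarrow> 'b"]
    by (simp add: mult_ac)
  moreover have "(\<Prod>j\<in>J. fact (y j) :: 'b) \<noteq> 0" using assms(1) by (simp add: prod_zero_iff)
  ultimately show ?thesis
    unfolding prod_insert_fun_upd[OF assms(1,2), of "\<lambda>j k. fact k"]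
      prod_insert_fun_upd[OF assms(1,2), of "\<lambda>j k. a j ^ k"]
    by (simp add: divide_simps)
qed

theorem multinomial_theorem:
  fixes a :: "'a \<Rightarrow> 'b::field_char_0"
  assumes "finite J"
  shows "(\<Sum>y\<in>compositions J n. fact n / (\<Prod>j\<in>J. fact (y j)) * (\<Prod>j\<in>J. a j ^ y j)) =
    (\<Sum>j\<in>J. a j) ^ n"
  using assms
proof (induction J arbitrary: n rule: finite_induct)
  case empty thus ?case by (simp add: compositions_empty)
next
  case (insert x J)
  have "(\<Sum>y\<in>compositions (insert x J) n.
        fact n / (\<Prod>j\<in>insert x J. fact (y j)) * (\<Prod>j\<in>insert x J. a j ^ y j)) =
      (\<Sum>b\<le>n. of_nat (n choose b) * a x ^ b *
        (\<Sum>y\<in>compositions J (n - b). fact (n - b) / (\<Prod>j\<in>J. fact (y j)) * (\<Prod>j\<in>J. a j ^ y j)))"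
    unfolding sum_compositions_insert[OF insert(1,2)] sum_distrib_left
    by (intro sum.cong refl multinomial_coeff_insert[OF insert(1,2)]) simp
  also have "\<dots> = (a x + (\<Sum>j\<in>J. a j)) ^ n"
    by (simp only: insert.IH binomial_ring[symmetric])
  finally show ?case using insert by simp
qed

lemma vandermonde_compositions:
  assumes "finite J"
  shows "(\<Sum>y\<in>compositions J n. \<Prod>j\<in>J. z j choose y j) = (\<Sum>j\<in>J. z j) choose n"
  using assms
proof (induction J arbitrary: n rule: finite_induct)
  case empty thus ?case by (simp add: compositions_empty)
next
  case (insert x J)
  have "(\<Sum>y\<in>compositions (insert x J) n. \<Prod>j\<in>insert x J. z j choose y j) =
      (\<Sum>b\<le>n. (z x choose b) * (\<Sum>y\<in>compositions J (n - b). \<Prod>j\<in>J. z j choose y j))"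
    unfolding sum_compositions_insert[OF insert(1,2)] sum_distrib_left
      prod_insert_fun_upd[OF insert(1,2), of "\<lambda>j k. z j choose k"] ..
  also have "\<dots> = (z x + (\<Sum>j\<in>J. z j)) choose n"
    by (simp only: insert.IH vandermonde)
  finally show ?case using insert by simp
qed

lemma sum_delta_mult:
  "finite A \<Longrightarrow> (\<Sum>y\<in>A. (if x = y then 1 else 0) * f y) = (if x \<in> A then f x else (0 :: 'a::semiring_1))"
  by (induction A rule: finite_induct) auto

lemma sum_mult_delta:
  "finite A \<Longrightarrow> (\<Sum>y\<in>A. f y * (if y = x then 1 else 0)) = (if x \<in> A then f x else (0 :: 'a::semiring_1))"
  by (induction A rule: finite_induct) auto

section \<open>Polynomial identities\<close>

lemma coeff_one_linear_power: "coeff ([:1, c:] ^ k) j = of_nat (k choose j) * (c :: 'a::comm_semiring_1) ^ j"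
proof (cases "j \<le> k")
  case True thus ?thesis by (simp add: coeff_linear_poly_power)
next
  case False
  have "degree ([:1, c:] ^ k) \<le> degree [:1, c:] * k" by (rule degree_power_le)
  also have "\<dots> \<le> k" by (simp add: mult_le_cancel2)
  finally have "degree ([:1, c:] ^ k) \<le> k" .
  with False show ?thesis by (simp add: coeff_eq_0 binomial_eq_0)
qed

lemma coeff_mult_linear_powers:
  "coeff ([:1, c:] ^ A * [:1, e:] ^ B) n =
    (\<Sum>j\<le>n. of_nat (A choose j) * c ^ j * (of_nat (B choose (n - j)) * (e :: 'a::comm_semiring_1) ^ (n - j)))"
  by (simp add: coeff_mult coeff_one_linear_power)

lemma poly_eq_sum_coeff:
  fixes P :: "'a::comm_semiring_1 poly"
  assumes "degree P \<le> N"
  shows "poly P t = (\<Sum>n\<le>N. coeff P n * t ^ n)"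
  unfolding poly_altdef using assms by (intro sum.mono_neutral_left) (auto simp: coeff_eq_0)

lemma sum_binomial_coeff_shift:
  fixes q :: "'a::comm_ring_1"
  shows "(\<Sum>b\<le>s. of_nat (s choose b) * q ^ b * (1 - q) ^ (s - b) *
      coeff ([:1, 1 - q:] ^ (k + b) * [:1, - q:] ^ (m + (s - b))) n) =
    coeff ([:1, 1 - q:] ^ k * [:1, - q:] ^ m) n"
proof -
  define X where "X = [:1, 1 - q:]"
  define Y where "Y = [:1, - q:]"
  have "smult q X + smult (1 - q) Y = 1"
    unfolding X_def Y_def by (simp add: one_pCons algebra_simps)
  hence "X ^ k * Y ^ m = X ^ k * Y ^ m * (smult q X + smult (1 - q) Y) ^ s" by simp
  also have "\<dots> = (\<Sum>b\<le>s. smult (of_nat (s choose b) * q ^ b * (1 - q) ^ (s - b))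
      (X ^ k * X ^ b * (Y ^ m * Y ^ (s - b))))"
    by (simp add: binomial_ring sum_distrib_left smult_power of_nat_poly algebra_simps)
  finally have "coeff (X ^ k * Y ^ m) n = coeff (\<Sum>b\<le>s. smult (of_nat (s choose b) * q ^ b * (1 - q) ^ (s - b))
      (X ^ (k + b) * Y ^ (m + (s - b)))) n"
    by (simp only: power_add)
  thus ?thesis unfolding X_def Y_def by (simp only: coeff_sum coeff_smult)
qed

lemma choose_mult_choose_diff_commute:
  "(u choose a) * ((u - a) choose j) = (u choose j) * ((u - j) choose a)"
proof (cases "a + j \<le> u")
  case True
  have "(u choose (a + j)) * ((a + j) choose a) = (u choose a) * ((u - a) choose j)"
    "(u choose (a + j)) * ((a + j) choose j) = (u choose j) * ((u - j) choose a)"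
    using choose_mult[of a "a + j" u] choose_mult[of j "a + j" u] True by simp_all
  moreover have "(a + j) choose a = (a + j) choose j"
    using binomial_symmetric[of a "a + j"] by simp
  ultimately show ?thesis by metis
next
  case False
  thus ?thesis by (cases "a \<le> u"; cases "j \<le> u") (simp_all add: binomial_eq_0)
qed

lemma sum_choose_four_products:
  assumes "j \<le> n"
  shows "(\<Sum>a\<le>s. (u choose a) * ((u - a) choose j) * ((M choose (s - a)) * ((M - (s - a)) choose (n - j)))) =
    (u choose j) * (M choose (n - j)) * ((u + M - n) choose s)"
proof -
  have "(u choose a) * ((u - a) choose j) * ((M choose (s - a)) * ((M - (s - a)) choose (n - j))) =
      (u choose j) * (M choose (n - j)) * (((u - j) choose a) * ((M - (n - j)) choose (s - a)))" for a
    unfolding choose_mult_choose_diff_commute[of u a j] choose_mult_choose_diff_commute[of M "s - a" "n - j"]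
    by (simp only: mult_ac)
  hence "(\<Sum>a\<le>s. (u choose a) * ((u - a) choose j) * ((M choose (s - a)) * ((M - (s - a)) choose (n - j)))) =
      (u choose j) * (M choose (n - j)) * (\<Sum>a\<le>s. ((u - j) choose a) * ((M - (n - j)) choose (s - a)))"
    by (simp only: sum_distrib_left)
  also have "\<dots> = (u choose j) * (M choose (n - j)) * ((u + M - n) choose s)"
  proof (cases "j \<le> u \<and> n - j \<le> M")
    case True
    hence "u - j + (M - (n - j)) = u + M - n" using assms by auto
    thus ?thesis by (simp add: vandermonde)
  qed auto
  finally show ?thesis .
qed

lemma sum_hypergeometric_coeff:
  "(\<Sum>a\<le>s. of_nat (u choose a) * of_nat (M choose (s - a)) *
      coeff ([:1, c:] ^ (u - a) * [:1, e:] ^ (M - (s - a))) n) =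
    of_nat ((u + M - n) choose s) * coeff ([:1, c:] ^ u * [:1, e:] ^ M) n"
  for c e :: "'a::comm_ring_1"
proof -
  have "(\<Sum>a\<le>s. of_nat (u choose a) * of_nat (M choose (s - a)) *
      coeff ([:1, c:] ^ (u - a) * [:1, e:] ^ (M - (s - a))) n) =
    (\<Sum>j\<le>n. c ^ j * e ^ (n - j) * of_nat (\<Sum>a\<le>s. (u choose a) * ((u - a) choose j) *
      ((M choose (s - a)) * ((M - (s - a)) choose (n - j)))))"
    unfolding coeff_mult_linear_powers
    by (simp add: sum_distrib_left sum_distrib_right mult_ac sum.swap[of _ "{..s}"])
  also have "\<dots> = (\<Sum>j\<le>n. c ^ j * e ^ (n - j) *
      of_nat ((u choose j) * (M choose (n - j)) * ((u + M - n) choose s)))"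
    by (intro sum.cong refl) (simp only: sum_choose_four_products atMost_iff)
  also have "\<dots> = of_nat ((u + M - n) choose s) * coeff ([:1, c:] ^ u * [:1, e:] ^ M) n"
    unfolding coeff_mult_linear_powers by (simp add: sum_distrib_left mult_ac)
  finally show ?thesis .
qed

section \<open>The transition kernel\<close>

lemma multinom_eq_prod: "multinom d N p x = fact N * (\<Prod>j<d. p j ^ x j / fact (x j))"
  unfolding multinom_def by (simp add: prod_dividef prod.distrib)

lemma sum_multinom: "(\<Sum>y\<in>compositions {..<d} n. multinom d n p y) = (\<Sum>j<d. p j) ^ n"
  unfolding multinom_def by (rule multinomial_theorem) simp

lemma multinom_pos: "(\<And>j. j < d \<Longrightarrow> 0 < p j) \<Longrightarrow> 0 < multinom d N p y"
  unfolding multinom_eq_prod by (intro mult_pos_pos prod_pos) auto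

lemma sum_multinom_marginal:
  assumes "i < d"
  shows "(\<Sum>w\<in>compositions {..<d} n. multinom d n p w * g (w i)) =
    (\<Sum>b\<le>n. of_nat (n choose b) * p i ^ b * (\<Sum>j\<in>{..<d} - {i}. p j) ^ (n - b) * g b)"
proof -
  define J where "J = {..<d} - {i}"
  have J: "finite J" "i \<notin> J" and d: "{..<d} = insert i J" using assms by (auto simp: J_def)
  have "(\<Sum>w\<in>compositions {..<d} n. multinom d n p w * g (w i)) =
      (\<Sum>b\<le>n. of_nat (n choose b) * p i ^ b * (\<Sum>w\<in>compositions J (n - b).
        fact (n - b) / (\<Prod>j\<in>J. fact (w j)) * (\<Prod>j\<in>J. p j ^ w j)) * g b)"
    unfolding multinom_def d sum_compositions_insert[OF J] sum_distrib_left sum_distrib_right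
    by (intro sum.cong refl) (subst multinomial_coeff_insert[OF J]; simp add: mult_ac)
  also have "\<dots> = (\<Sum>b\<le>n. of_nat (n choose b) * p i ^ b * (\<Sum>j\<in>J. p j) ^ (n - b) * g b)"
    by (simp only: multinomial_theorem[OF J(1)])
  finally show ?thesis unfolding J_def .
qed

lemma sum_hypergeometric_marginal:
  fixes d :: nat
  assumes "i < d"
  shows "(\<Sum>m\<in>compositions {..<d} n. (\<Prod>j<d. real (z j choose m j)) * h (m i)) =
    (\<Sum>a\<le>n. of_nat (z i choose a) * of_nat ((\<Sum>j\<in>{..<d} - {i}. z j) choose (n - a)) * h a)"
proof -
  define J where "J = {..<d} - {i}"
  have J: "finite J" "i \<notin> J" and d: "{..<d} = insert i J" using assms by (auto simp: J_def)
  have "(\<Sum>m\<in>compositions {..<d} n. (\<Prod>j<d. real (z j choose m j)) * h (m i)) =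
      (\<Sum>a\<le>n. of_nat (z i choose a) * h a *
        real (\<Sum>m\<in>compositions J (n - a). \<Prod>j\<in>J. z j choose m j))"
    unfolding d sum_compositions_insert[OF J] of_nat_sum of_nat_prod sum_distrib_left
    by (intro sum.cong refl) (subst prod_insert_fun_upd[OF J]; simp add: mult_ac)
  also have "\<dots> = (\<Sum>a\<le>n. of_nat (z i choose a) * of_nat ((\<Sum>j\<in>J. z j) choose (n - a)) * h a)"
    by (simp only: vandermonde_compositions[OF J(1)] mult_ac)
  finally show ?thesis unfolding J_def .
qed

lemma sum_compositions_shift:
  fixes d :: nat
  assumes z: "z \<in> compositions {..<d} N" and m: "m \<in> compositions {..<d} s"
    and le: "\<forall>j<d. m j \<le> z j"
  shows "(\<Sum>y\<in>{y\<in>compositions {..<d} N. \<forall>j<d. z j \<le> y j + m j}. F (\<lambda>j. y j + m j - z j) y) =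
    (\<Sum>w\<in>compositions {..<d} s. F w (\<lambda>j. z j - m j + w j))"
proof (rule sum.reindex_bij_witness[where i = "\<lambda>w j. z j - m j + w j" and j = "\<lambda>y j. y j + m j - z j"])
  have out: "z j = 0" "m j = 0" if "\<not> j < d" for j
    using that z m by (simp_all add: compositions_outside)
  have zN: "(\<Sum>j<d. z j) = N" and ms: "(\<Sum>j<d. m j) = s"
    using z m unfolding compositions_def by auto
  have "(\<Sum>j<d. z j - m j) = N - s"
    using le zN ms by (subst sum_subtractf_nat) auto
  moreover have "s \<le> N" using le zN ms by (metis lessThan_iff sum_mono)
  ultimately have shifted_sum: "(\<Sum>j<d. z j - m j + w j) = N"
    if "w \<in> compositions {..<d} s" for w
    using that unfolding compositions_def by (simp add: sum.distrib)
  fix w assume w: "w \<in> compositions {..<d} s"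
  show "(\<lambda>j. (z j - m j + w j) + m j - z j) = w"
  proof
    fix j show "z j - m j + w j + m j - z j = w j"
      using le out compositions_outside[OF w] by (cases "j < d") auto
  qed
  show "(\<lambda>j. z j - m j + w j) \<in> {y\<in>compositions {..<d} N. \<forall>j<d. z j \<le> y j + m j}"
    using le out compositions_outside[OF w] shifted_sum[OF w]
    unfolding compositions_def by auto
next
  fix y assume "y \<in> {y\<in>compositions {..<d} N. \<forall>j<d. z j \<le> y j + m j}"
  hence y: "y \<in> compositions {..<d} N" and ge: "\<forall>j<d. z j \<le> y j + m j" by auto
  have out: "z j = 0" "m j = 0" "y j = 0" if "\<not> j < d" for j
    using that z m y by (simp_all add: compositions_outside)
  show eq: "(\<lambda>j. z j - m j + (y j + m j - z j)) = y"
  proof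
    fix j show "z j - m j + (y j + m j - z j) = y j"
      using le ge out by (cases "j < d") auto
  qed
  have "(\<Sum>j<d. y j + m j - z j) = (\<Sum>j<d. y j + m j) - (\<Sum>j<d. z j)"
    using ge by (subst sum_subtractf_nat) auto
  also have "\<dots> = s" using y z m unfolding compositions_def by (simp add: sum.distrib)
  finally show "(\<lambda>j. y j + m j - z j) \<in> compositions {..<d} s"
    using out unfolding compositions_def by auto
  show "F (\<lambda>j. y j + m j - z j) (\<lambda>j. z j - m j + (y j + m j - z j)) = F (\<lambda>j. y j + m j - z j) y"
    by (simp only: eq)
qed

lemma prod_choose_eq_0:
  fixes d :: nat
  assumes "\<not> (\<forall>j<d. m j \<le> z j)"
  shows "(\<Prod>j<d. real (z j choose m j)) = 0"
  using assms by (simp add: prod_zero_iff) (meson lessThan_iff not_le)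

text \<open>The guard \<open>m \<le> z\<close> of \<open>ehr_K\<close> can be dropped: when it fails, the product of binomials vanishes.\<close>

lemma sum_ehr_K_mult:
  assumes z: "z \<in> ehr_states d N"
  shows "(\<Sum>y\<in>ehr_states d N. ehr_K d N s p z y * G y) =
    (\<Sum>m\<in>compositions {..<d} s. (\<Prod>j<d. real (z j choose m j)) / real (N choose s) *
      (\<Sum>w\<in>compositions {..<d} s. multinom d s p w * G (\<lambda>j. z j - m j + w j)))"
proof -
  have "(\<Sum>y\<in>ehr_states d N. ehr_K d N s p z y * G y) =
      (\<Sum>m\<in>compositions {..<d} s. \<Sum>y\<in>compositions {..<d} N.
        (if \<forall>j<d. m j \<le> z j \<and> z j \<le> y j + m j
         then (\<Prod>j<d. real (z j choose m j)) / real (N choose s) * multinom d s p (\<lambda>j. y j + m j - z j)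
         else 0) * G y)"
    unfolding ehr_K_def ehr_states_eq_compositions sum_distrib_right by (rule sum.swap)
  also have "\<dots> = (\<Sum>m\<in>compositions {..<d} s. (\<Prod>j<d. real (z j choose m j)) / real (N choose s) *
      (\<Sum>w\<in>compositions {..<d} s. multinom d s p w * G (\<lambda>j. z j - m j + w j)))"
  proof (rule sum.cong[OF refl])
    fix m assume m: "m \<in> compositions {..<d} s"
    show "(\<Sum>y\<in>compositions {..<d} N.
        (if \<forall>j<d. m j \<le> z j \<and> z j \<le> y j + m j
         then (\<Prod>j<d. real (z j choose m j)) / real (N choose s) * multinom d s p (\<lambda>j. y j + m j - z j)
         else 0) * G y) =
      (\<Prod>j<d. real (z j choose m j)) / real (N choose s) *
      (\<Sum>w\<in>compositions {..<d} s. multinom d s p w * G (\<lambda>j. z j - m j + w j))"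
    proof (cases "\<forall>j<d. m j \<le> z j")
      case True
      define c where "c = (\<Prod>j<d. real (z j choose m j)) / real (N choose s)"
      have "(\<Sum>y\<in>compositions {..<d} N.
          (if \<forall>j<d. m j \<le> z j \<and> z j \<le> y j + m j
           then c * multinom d s p (\<lambda>j. y j + m j - z j) else 0) * G y) =
        (\<Sum>y\<in>{y\<in>compositions {..<d} N. \<forall>j<d. z j \<le> y j + m j}.
           c * (multinom d s p (\<lambda>j. y j + m j - z j) * G y))"
        unfolding sum.inter_filter[OF finite_compositions[OF finite_lessThan]]
        using True by (intro sum.cong refl) (auto simp: all_conj_distrib)
      also have "\<dots> = c * (\<Sum>w\<in>compositions {..<d} s. multinom d s p w * G (\<lambda>j. z j - m j + w j))"
        unfolding sum_distrib_left by (rule sum_compositions_shift[OF z[unfolded ehr_states_eq_compositions] m True])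
      finally show ?thesis unfolding c_def .
    next
      case False
      hence H0: "(\<Prod>j<d. real (z j choose m j)) = 0" by (rule prod_choose_eq_0)
      show ?thesis unfolding H0 by (simp cong: if_cong)
    qed
  qed
  finally show ?thesis .
qed

lemma ehr_Kpow_add:
  assumes "y \<in> ehr_states d N"
  shows "ehr_Kpow d N s p (a + b) x y =
    (\<Sum>z\<in>ehr_states d N. ehr_Kpow d N s p a x z * ehr_Kpow d N s p b z y)"
  using assms
proof (induction b arbitrary: y)
  case 0
  thus ?case by (simp add: sum_mult_delta ehr_states_eq_compositions finite_compositions)
next
  case (Suc b)
  have "ehr_Kpow d N s p (a + Suc b) x y =
      (\<Sum>w\<in>ehr_states d N. \<Sum>z\<in>ehr_states d N.
        ehr_Kpow d N s p a x z * ehr_Kpow d N s p b z w * ehr_K d N s p w y)"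
    by (simp add: Suc.IH sum_distrib_right)
  also have "\<dots> = (\<Sum>z\<in>ehr_states d N. ehr_Kpow d N s p a x z * ehr_Kpow d N s p (Suc b) z y)"
    unfolding ehr_Kpow.simps sum_distrib_left mult.assoc by (rule sum.swap)
  finally show ?case .
qed

lemma ehr_Kpow_Suc_left:
  assumes "x \<in> ehr_states d N" "y \<in> ehr_states d N"
  shows "ehr_Kpow d N s p (Suc l) x y = (\<Sum>z\<in>ehr_states d N. ehr_K d N s p x z * ehr_Kpow d N s p l z y)"
proof -
  have "ehr_Kpow d N s p 1 x z = ehr_K d N s p x z" for z
    using assms(1) by (simp add: sum_delta_mult ehr_states_eq_compositions finite_compositions)
  with ehr_Kpow_add[OF assms(2), of s p 1 l x] show ?thesis by simp
qed

section \<open>Reversibility\<close>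

lemma power_fact_choose_swap:
  fixes q :: real
  assumes "m \<le> z" "k \<le> y" "z - m = y - k"
  shows "q ^ z / fact z * real (z choose m) * (q ^ k / fact k) =
    q ^ y / fact y * real (y choose k) * (q ^ m / fact m)"
proof -
  define w where "w = z - m"
  have z: "z = w + m" and y: "y = w + k" using assms unfolding w_def by auto
  have "q ^ z / fact z * real (z choose m) * (q ^ k / fact k) = q ^ (w + m + k) / (fact m * fact w * fact k)"
    unfolding z binomial_fact[OF le_add2] by (simp add: power_add field_simps)
  also have "\<dots> = q ^ y / fact y * real (y choose k) * (q ^ m / fact m)"
    unfolding y binomial_fact[OF le_add2] by (simp add: power_add field_simps)
  finally show ?thesis .
qed

lemma multinom_choose_swap:
  assumes "\<forall>j<d. m j \<le> z j \<and> k j \<le> y j \<and> z j - m j = y j - k j"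
  shows "multinom d N p z * (\<Prod>j<d. real (z j choose m j)) * multinom d s p k =
    multinom d N p y * (\<Prod>j<d. real (y j choose k j)) * multinom d s p m"
proof -
  have "(\<Prod>j<d. p j ^ z j / fact (z j) * real (z j choose m j) * (p j ^ k j / fact (k j))) =
      (\<Prod>j<d. p j ^ y j / fact (y j) * real (y j choose k j) * (p j ^ m j / fact (m j)))"
    using assms by (intro prod.cong refl power_fact_choose_swap) auto
  thus ?thesis unfolding multinom_eq_prod prod.distrib by (simp only: mult_ac)
qed

lemma compositions_transfer:
  fixes d :: nat
  assumes z: "z \<in> compositions {..<d} N" and y: "y \<in> compositions {..<d} N"
    and m: "m \<in> compositions {..<d} s" and le: "\<forall>j<d. m j \<le> z j \<and> z j \<le> y j + m j"
  shows "(\<lambda>j. y j + m j - z j) \<in> {k \<in> compositions {..<d} s. \<forall>j<d. k j \<le> y j \<and> y j \<le> z j + k j}"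
    and "(\<lambda>j. z j + (y j + m j - z j) - y j) = m"
proof -
  have out: "z j = 0" "y j = 0" "m j = 0" if "\<not> j < d" for j
    using that z y m by (simp_all add: compositions_outside)
  have "(\<Sum>j<d. y j + m j - z j) = (\<Sum>j<d. y j + m j) - (\<Sum>j<d. z j)"
    using le by (subst sum_subtractf_nat) auto
  also have "\<dots> = s" using y z m unfolding compositions_def by (simp add: sum.distrib)
  finally show "(\<lambda>j. y j + m j - z j) \<in> {k \<in> compositions {..<d} s. \<forall>j<d. k j \<le> y j \<and> y j \<le> z j + k j}"
    using le out unfolding compositions_def by auto
  show "(\<lambda>j. z j + (y j + m j - z j) - y j) = m"
  proof
    fix j show "z j + (y j + m j - z j) - y j = m j"
      using le out by (cases "j < d") auto
  qed
qed

text \<open>A step from \<open>z\<close> to \<open>y\<close> that draws \<open>m\<close> balls and puts back \<open>y + m - z\<close> corresponds to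
  the reverse step from \<open>y\<close> to \<open>z\<close> that draws \<open>y + m - z\<close> balls and puts back \<open>m\<close>.\<close>

lemma sum_compositions_swap:
  fixes d :: nat
  assumes z: "z \<in> compositions {..<d} N" and y: "y \<in> compositions {..<d} N"
  shows "(\<Sum>m\<in>{m \<in> compositions {..<d} s. \<forall>j<d. m j \<le> z j \<and> z j \<le> y j + m j}.
      F m (\<lambda>j. y j + m j - z j)) =
    (\<Sum>k\<in>{k \<in> compositions {..<d} s. \<forall>j<d. k j \<le> y j \<and> y j \<le> z j + k j}.
      F (\<lambda>j. z j + k j - y j) k)"
proof (rule sum.reindex_bij_witness[where i = "\<lambda>k j. z j + k j - y j" and j = "\<lambda>m j. y j + m j - z j"])
  fix m assume "m \<in> {m \<in> compositions {..<d} s. \<forall>j<d. m j \<le> z j \<and> z j \<le> y j + m j}"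
  hence m: "m \<in> compositions {..<d} s" "\<forall>j<d. m j \<le> z j \<and> z j \<le> y j + m j" by auto
  show "(\<lambda>j. z j + (y j + m j - z j) - y j) = m"
    "(\<lambda>j. y j + m j - z j) \<in> {k \<in> compositions {..<d} s. \<forall>j<d. k j \<le> y j \<and> y j \<le> z j + k j}"
    using compositions_transfer[OF z y m] by auto
  thus "F (\<lambda>j. z j + (y j + m j - z j) - y j) (\<lambda>j. y j + m j - z j) = F m (\<lambda>j. y j + m j - z j)"
    by simp
next
  fix k assume "k \<in> {k \<in> compositions {..<d} s. \<forall>j<d. k j \<le> y j \<and> y j \<le> z j + k j}"
  hence k: "k \<in> compositions {..<d} s" "\<forall>j<d. k j \<le> y j \<and> y j \<le> z j + k j" by auto
  show "(\<lambda>j. y j + (z j + k j - y j) - z j) = k"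
    "(\<lambda>j. z j + k j - y j) \<in> {m \<in> compositions {..<d} s. \<forall>j<d. m j \<le> z j \<and> z j \<le> y j + m j}"
    using compositions_transfer[OF y z k] by auto
qed

lemma ehr_K_detailed_balance:
  assumes z: "z \<in> ehr_states d N" and y: "y \<in> ehr_states d N"
  shows "multinom d N p z * ehr_K d N s p z y = multinom d N p y * ehr_K d N s p y z"
proof -
  define T where "T a m k = multinom d N p a * (\<Prod>j<d. real (a j choose m j)) * multinom d s p k"
    for a m k :: "nat \<Rightarrow> nat"
  have K: "multinom d N p a * ehr_K d N s p a b =
      (\<Sum>m\<in>{m \<in> compositions {..<d} s. \<forall>j<d. m j \<le> a j \<and> a j \<le> b j + m j}.
        T a m (\<lambda>j. b j + m j - a j)) / real (N choose s)" for a b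
    unfolding ehr_K_def ehr_states_eq_compositions T_def sum_distrib_left sum_divide_distrib
      sum.inter_filter[OF finite_compositions[OF finite_lessThan]]
    by (intro sum.cong refl) auto
  have "multinom d N p z * ehr_K d N s p z y =
      (\<Sum>k\<in>{k \<in> compositions {..<d} s. \<forall>j<d. k j \<le> y j \<and> y j \<le> z j + k j}.
        T z (\<lambda>j. z j + k j - y j) k) / real (N choose s)"
    unfolding K using z y unfolding ehr_states_eq_compositions by (subst sum_compositions_swap) auto
  also have "\<dots> = multinom d N p y * ehr_K d N s p y z"
    unfolding K
  proof (intro arg_cong[where f = "\<lambda>t. t / _"] sum.cong refl)
    fix k assume "k \<in> {k \<in> compositions {..<d} s. \<forall>j<d. k j \<le> y j \<and> y j \<le> z j + k j}"
    hence "\<forall>j<d. z j + k j - y j \<le> z j \<and> k j \<le> y j \<and> z j - (z j + k j - y j) = y j - k j"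
      by auto
    thus "T z (\<lambda>j. z j + k j - y j) k = T y k (\<lambda>j. z j + k j - y j)"
      unfolding T_def by (rule multinom_choose_swap)
  qed
  finally show ?thesis .
qed

lemma ehr_Kpow_detailed_balance:
  assumes "x \<in> ehr_states d N" "y \<in> ehr_states d N"
  shows "multinom d N p x * ehr_Kpow d N s p l x y = multinom d N p y * ehr_Kpow d N s p l y x"
  using assms
proof (induction l arbitrary: x y)
  case (Suc l)
  have "multinom d N p x * ehr_Kpow d N s p (Suc l) x y =
      (\<Sum>z\<in>ehr_states d N. ehr_Kpow d N s p l z x * (multinom d N p z * ehr_K d N s p z y))"
    unfolding ehr_Kpow.simps sum_distrib_left
  proof (intro sum.cong refl)
    fix z assume "z \<in> ehr_states d N"
    with Suc.IH[OF Suc.prems(1)] show "multinom d N p x * (ehr_Kpow d N s p l x z * ehr_K d N s p z y) =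
        ehr_Kpow d N s p l z x * (multinom d N p z * ehr_K d N s p z y)"
      by (metis mult.assoc mult.commute)
  qed
  also have "\<dots> = multinom d N p y * (\<Sum>z\<in>ehr_states d N. ehr_K d N s p y z * ehr_Kpow d N s p l z x)"
    unfolding sum_distrib_left
  proof (intro sum.cong refl)
    fix z assume "z \<in> ehr_states d N"
    from ehr_K_detailed_balance[OF this Suc.prems(2)]
    show "ehr_Kpow d N s p l z x * (multinom d N p z * ehr_K d N s p z y) =
        multinom d N p y * (ehr_K d N s p y z * ehr_Kpow d N s p l z x)"
      by (metis mult.assoc mult.commute)
  qed
  also have "\<dots> = multinom d N p y * ehr_Kpow d N s p (Suc l) y x"
    by (simp only: ehr_Kpow_Suc_left[OF Suc.prems(2,1)])
  finally show ?case .
qed simp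

section \<open>Eigenfunctions and eigenvalues\<close>

text \<open>As a function of \<open>u\<close>, \<open>krawtchouk N q n u\<close> is, up to normalisation, the Krawtchouk
  polynomial of degree \<open>n\<close> for the binomial law \<open>Bin(N, q)\<close>.\<close>

definition krawtchouk :: "nat \<Rightarrow> real \<Rightarrow> nat \<Rightarrow> nat \<Rightarrow> real" where
  "krawtchouk N q n u = coeff ([:1, 1 - q:] ^ u * [:1, - q:] ^ (N - u)) n"

text \<open>The probability that none of \<open>n\<close> given balls is among the \<open>s\<close> balls drawn.\<close>

definition ehr_eigenvalue :: "nat \<Rightarrow> nat \<Rightarrow> nat \<Rightarrow> real" where
  "ehr_eigenvalue N s n = real ((N - n) choose s) / real (N choose s)"

lemma krawtchouk_0: "krawtchouk N q 0 u = 1"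
  unfolding krawtchouk_def by (simp add: coeff_mult coeff_one_linear_power)

lemma krawtchouk_full: "krawtchouk N q n N = of_nat (N choose n) * (1 - q) ^ n"
  unfolding krawtchouk_def by (simp add: coeff_one_linear_power)

lemma sum_krawtchouk_eq_indicator:
  fixes q :: real
  assumes "u \<le> N" "q \<noteq> 0"
  shows "q ^ N * (\<Sum>n\<le>N. (1 / q) ^ n * krawtchouk N q n u) = (if u = N then 1 else 0)"
proof -
  define P where "P = [:1, 1 - q:] ^ u * [:1, - q:] ^ (N - u)"
  have "degree P \<le> degree ([:1, 1 - q:] ^ u) + degree ([:1, - q:] ^ (N - u))"
    unfolding P_def by (rule degree_mult_le)
  also have "\<dots> \<le> 1 * u + 1 * (N - u)"
    by (intro add_mono order.trans[OF degree_power_le] mult_right_mono) auto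
  finally have "degree P \<le> N" using assms by simp
  have "(\<Sum>n\<le>N. (1 / q) ^ n * krawtchouk N q n u) = (\<Sum>n\<le>N. coeff P n * (1 / q) ^ n)"
    unfolding krawtchouk_def P_def by (simp only: mult.commute)
  also have "\<dots> = poly P (1 / q)"
    by (rule poly_eq_sum_coeff[symmetric]) fact
  also have "\<dots> = (1 + (1 - q) / q) ^ u * (1 - q / q) ^ (N - u)"
    unfolding P_def by (simp add: poly_power)
  also have "\<dots> = (1 / q) ^ u * 0 ^ (N - u)"
    using assms by (simp add: field_simps)
  finally show ?thesis using assms by (auto simp: power_one_over)
qed

lemma sum_multinom_krawtchouk:
  assumes i: "i < d" and p: "(\<Sum>j<d. p j) = 1"
    and z: "z \<in> compositions {..<d} N" and m: "m \<in> compositions {..<d} s" and le: "\<forall>j<d. m j \<le> z j"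
  shows "(\<Sum>w\<in>compositions {..<d} s. multinom d s p w * krawtchouk N (p i) n (z i - m i + w i)) =
    coeff ([:1, 1 - p i:] ^ (z i - m i) * [:1, - p i:] ^ (N - z i - (s - m i))) n"
proof -
  have rest: "(\<Sum>j\<in>{..<d} - {i}. f j) = (\<Sum>j<d. f j) - f i" for f :: "nat \<Rightarrow> 'a::ab_group_add"
    using i by (simp add: sum_diff1)
  have split: "(\<Sum>j<d. f j) = f i + (\<Sum>j\<in>{..<d} - {i}. f j)" for f :: "nat \<Rightarrow> nat"
    using i by (simp add: sum.remove)
  have "(\<Sum>j\<in>{..<d} - {i}. m j) \<le> (\<Sum>j\<in>{..<d} - {i}. z j)" using le by (intro sum_mono) auto
  moreover have "s = m i + (\<Sum>j\<in>{..<d} - {i}. m j)" "N = z i + (\<Sum>j\<in>{..<d} - {i}. z j)"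
    using m z split unfolding compositions_def by auto
  ultimately have exps: "N - (z i - m i + b) = (N - z i - (s - m i)) + (s - b)" if "b \<le> s" for b
    using that le i by auto
  have "(\<Sum>w\<in>compositions {..<d} s. multinom d s p w * krawtchouk N (p i) n (z i - m i + w i)) =
      (\<Sum>b\<le>s. of_nat (s choose b) * p i ^ b * (\<Sum>j\<in>{..<d} - {i}. p j) ^ (s - b) *
        krawtchouk N (p i) n (z i - m i + b))"
    by (rule sum_multinom_marginal[OF i])
  also have "\<dots> = (\<Sum>b\<le>s. of_nat (s choose b) * p i ^ b * (1 - p i) ^ (s - b) *
        coeff ([:1, 1 - p i:] ^ (z i - m i + b) * [:1, - p i:] ^ (N - z i - (s - m i) + (s - b))) n)"
    unfolding rest p krawtchouk_def by (intro sum.cong refl) (simp add: exps)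
  also have "\<dots> = coeff ([:1, 1 - p i:] ^ (z i - m i) * [:1, - p i:] ^ (N - z i - (s - m i))) n"
    by (rule sum_binomial_coeff_shift)
  finally show ?thesis .
qed

lemma ehr_K_krawtchouk:
  assumes i: "i < d" and p: "(\<Sum>j<d. p j) = 1" and z: "z \<in> ehr_states d N"
  shows "(\<Sum>y\<in>ehr_states d N. ehr_K d N s p z y * krawtchouk N (p i) n (y i)) =
    ehr_eigenvalue N s n * krawtchouk N (p i) n (z i)"
proof -
  define phi where
    "phi a = coeff ([:1, 1 - p i:] ^ (z i - a) * [:1, - p i:] ^ (N - z i - (s - a))) n" for a
  have zN: "(\<Sum>j<d. z j) = N" using z unfolding ehr_states_def by auto
  have rest: "(\<Sum>j\<in>{..<d} - {i}. z j) = N - z i" using i zN by (simp add: sum_diff1_nat)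
  have "z i \<le> N" using i zN member_le_sum[of i "{..<d}" z] by simp
  have "(\<Sum>y\<in>ehr_states d N. ehr_K d N s p z y * krawtchouk N (p i) n (y i)) =
      (\<Sum>m\<in>compositions {..<d} s. (\<Prod>j<d. real (z j choose m j)) / real (N choose s) *
        (\<Sum>w\<in>compositions {..<d} s. multinom d s p w * krawtchouk N (p i) n (z i - m i + w i)))"
    by (rule sum_ehr_K_mult[OF z])
  also have "\<dots> = (\<Sum>m\<in>compositions {..<d} s. (\<Prod>j<d. real (z j choose m j)) * phi (m i)) /
      real (N choose s)"
    unfolding sum_divide_distrib
  proof (intro sum.cong refl)
    fix m assume m: "m \<in> compositions {..<d} s"
    show "(\<Prod>j<d. real (z j choose m j)) / real (N choose s) *
        (\<Sum>w\<in>compositions {..<d} s. multinom d s p w * krawtchouk N (p i) n (z i - m i + w i)) =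
      (\<Prod>j<d. real (z j choose m j)) * phi (m i) / real (N choose s)"
      by (cases "\<forall>j<d. m j \<le> z j")
        (simp_all add: sum_multinom_krawtchouk[OF i p z[unfolded ehr_states_eq_compositions] m] phi_def prod_choose_eq_0)
  qed
  also have "\<dots> = (\<Sum>a\<le>s. of_nat (z i choose a) * of_nat ((N - z i) choose (s - a)) * phi a) /
      real (N choose s)"
    by (simp only: sum_hypergeometric_marginal[OF i] rest)
  also have "\<dots> = ehr_eigenvalue N s n * krawtchouk N (p i) n (z i)"
    unfolding phi_def sum_hypergeometric_coeff ehr_eigenvalue_def krawtchouk_def
    using \<open>z i \<le> N\<close> by simp
  finally show ?thesis .
qed

lemma ehr_Kpow_krawtchouk:
  assumes "i < d" "(\<Sum>j<d. p j) = 1" and z: "z \<in> ehr_states d N"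
  shows "(\<Sum>y\<in>ehr_states d N. ehr_Kpow d N s p l z y * krawtchouk N (p i) n (y i)) =
    ehr_eigenvalue N s n ^ l * krawtchouk N (p i) n (z i)"
proof (induction l)
  case 0
  show ?case using z by (simp add: ehr_states_eq_compositions finite_compositions sum_delta_mult)
next
  case (Suc l)
  have "(\<Sum>y\<in>ehr_states d N. ehr_Kpow d N s p (Suc l) z y * krawtchouk N (p i) n (y i)) =
      (\<Sum>w\<in>ehr_states d N. ehr_Kpow d N s p l z w *
        (\<Sum>y\<in>ehr_states d N. ehr_K d N s p w y * krawtchouk N (p i) n (y i)))"
    unfolding ehr_Kpow.simps sum_distrib_left sum_distrib_right mult.assoc by (rule sum.swap)
  also have "\<dots> = (\<Sum>w\<in>ehr_states d N. ehr_Kpow d N s p l z w *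
      (ehr_eigenvalue N s n * krawtchouk N (p i) n (w i)))"
    by (intro sum.cong refl) (simp add: ehr_K_krawtchouk assms)
  also have "\<dots> = ehr_eigenvalue N s n * (ehr_eigenvalue N s n ^ l * krawtchouk N (p i) n (z i))"
    by (simp add: Suc.IH[symmetric] sum_distrib_left mult_ac)
  finally show ?case by simp
qed

lemma ehr_eigenvalue_0: "s \<le> N \<Longrightarrow> ehr_eigenvalue N s 0 = 1"
  unfolding ehr_eigenvalue_def by simp

lemma sum_ehr_Kpow:
  assumes "0 < d" "(\<Sum>j<d. p j) = 1" "s \<le> N" "x \<in> ehr_states d N"
  shows "(\<Sum>y\<in>ehr_states d N. ehr_Kpow d N s p l x y) = 1"
  using ehr_Kpow_krawtchouk[OF assms(1,2,4), of s l 0] assms(3) by (simp add: krawtchouk_0 ehr_eigenvalue_0)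

lemma ehr_eigenvalue_nonneg: "0 \<le> ehr_eigenvalue N s n"
  unfolding ehr_eigenvalue_def by simp

lemma ehr_eigenvalue_1:
  assumes "s \<le> N" "1 \<le> N"
  shows "ehr_eigenvalue N s 1 = 1 - real s / real N"
proof -
  have "real (N - s) * real (N choose s) = real N * real ((N - 1) choose s)"
    using arg_cong[OF binomial_absorb_comp[of N s], of real] by simp
  moreover have "0 < real (N choose s)" "0 < real N" using assms by simp_all
  ultimately have "ehr_eigenvalue N s 1 = real (N - s) / real N"
    unfolding ehr_eigenvalue_def by (simp add: field_simps)
  thus ?thesis using assms by (simp add: of_nat_diff diff_divide_distrib)
qed

lemma choose_pred_le:
  assumes "1 \<le> s" "m \<le> N" "0 < N"
  shows "real ((m - 1) choose s) \<le> real (m choose s) * (1 - real s / real N)"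
proof (cases "s < m")
  case True
  have "real (m - s) * real (m choose s) = real m * real ((m - 1) choose s)"
    by (simp only: binomial_absorb_comp of_nat_mult[symmetric])
  hence "real ((m - 1) choose s) = real (m choose s) * (1 - real s / real m)"
    using True by (simp add: of_nat_diff field_simps)
  also have "\<dots> \<le> real (m choose s) * (1 - real s / real N)"
    using True assms by (intro mult_left_mono diff_left_mono divide_left_mono) auto
  finally show ?thesis .
next
  case False
  hence "(m - 1) choose s = 0" using assms(1) by (simp add: binomial_eq_0)
  moreover have "m choose s = 0 \<or> s \<le> N" using False assms(2) by (auto simp: binomial_eq_0)
  hence "0 \<le> real (m choose s) * (1 - real s / real N)"
  proof
    assume "s \<le> N"
    hence "0 \<le> 1 - real s / real N" using assms(3) by (simp add: field_simps)
    thus ?thesis by simp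
  qed (simp add: binomial_eq_0)
  ultimately show ?thesis by (simp add: binomial_eq_0)
qed

lemma ehr_eigenvalue_le_power:
  assumes "1 \<le> s" "s \<le> N"
  shows "ehr_eigenvalue N s n \<le> (1 - real s / real N) ^ n"
proof (induction n)
  case 0 thus ?case using assms by (simp add: ehr_eigenvalue_0)
next
  case (Suc n)
  have "N - Suc n = (N - n) - 1" by simp
  hence "ehr_eigenvalue N s (Suc n) = real ((N - n - 1) choose s) / real (N choose s)"
    unfolding ehr_eigenvalue_def by (simp only:)
  also have "\<dots> \<le> real ((N - n) choose s) * (1 - real s / real N) / real (N choose s)"
    using choose_pred_le[OF assms(1), of "N - n" N] assms by (intro divide_right_mono) auto
  also have "\<dots> = ehr_eigenvalue N s n * (1 - real s / real N)"
    unfolding ehr_eigenvalue_def by simp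
  also have "\<dots> \<le> (1 - real s / real N) ^ n * (1 - real s / real N)"
    using assms by (intro mult_right_mono Suc) (simp add: field_simps)
  finally show ?case by (simp add: mult.commute)
qed

section \<open>The chi-square distance from a full urn\<close>

definition full_urn :: "nat \<Rightarrow> nat \<Rightarrow> nat \<Rightarrow> nat" where
  "full_urn i N = (\<lambda>j. if j = i then N else 0)"

lemma full_urn_self [simp]: "full_urn i N i = N"
  unfolding full_urn_def by simp

lemma full_urn_in_ehr_states: "i < d \<Longrightarrow> full_urn i N \<in> ehr_states d N"
  unfolding ehr_states_def full_urn_def by simp

lemma multinom_full_urn: "i < d \<Longrightarrow> multinom d N p (full_urn i N) = p i ^ N"
  unfolding multinom_eq_prod full_urn_def by (simp add: if_distrib cong: if_cong)

lemma eq_full_urn_iff: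
  assumes "i < d" "w \<in> ehr_states d N"
  shows "w = full_urn i N \<longleftrightarrow> w i = N"
proof
  assume "w i = N"
  moreover have "(\<Sum>j<d. w j) = w i + (\<Sum>j\<in>{..<d} - {i}. w j)" using assms(1) by (simp add: sum.remove)
  ultimately have "\<forall>j\<in>{..<d} - {i}. w j = 0" using assms(2) unfolding ehr_states_def by simp
  show "w = full_urn i N"
  proof
    fix j show "w j = full_urn i N j"
      using \<open>\<forall>j\<in>{..<d} - {i}. w j = 0\<close> \<open>w i = N\<close> assms(2)
      unfolding ehr_states_def full_urn_def by (cases "j < d") auto
  qed
qed (simp add: full_urn_def)

lemma ehr_Kpow_to_full_urn:
  assumes i: "i < d" and p: "(\<Sum>j<d. p j) = 1" "p i \<noteq> 0" and y: "y \<in> ehr_states d N"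
  shows "ehr_Kpow d N s p l y (full_urn i N) =
    p i ^ N * (\<Sum>n\<le>N. (1 / p i) ^ n * ehr_eigenvalue N s n ^ l * krawtchouk N (p i) n (y i))"
proof -
  have indicator: "(if w = full_urn i N then 1 else 0) =
      p i ^ N * (\<Sum>n\<le>N. (1 / p i) ^ n * krawtchouk N (p i) n (w i))" if w: "w \<in> ehr_states d N" for w
  proof -
    have "w i \<le> N" using w i member_le_sum[of i "{..<d}" w] unfolding ehr_states_def by simp
    thus ?thesis using sum_krawtchouk_eq_indicator[OF _ p(2)] eq_full_urn_iff[OF i w] by simp
  qed
  have "ehr_Kpow d N s p l y (full_urn i N) =
      (\<Sum>w\<in>ehr_states d N. ehr_Kpow d N s p l y w * (if w = full_urn i N then 1 else 0))"
    using full_urn_in_ehr_states[OF i]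
    by (simp add: sum_mult_delta ehr_states_eq_compositions finite_compositions)
  also have "\<dots> = p i ^ N * (\<Sum>n\<le>N. (1 / p i) ^ n *
      (\<Sum>w\<in>ehr_states d N. ehr_Kpow d N s p l y w * krawtchouk N (p i) n (w i)))"
    by (simp add: indicator sum_distrib_left sum.swap[of _ "{..N}"] mult_ac cong: sum.cong)
  also have "\<dots> = p i ^ N * (\<Sum>n\<le>N. (1 / p i) ^ n * ehr_eigenvalue N s n ^ l * krawtchouk N (p i) n (y i))"
    by (simp add: ehr_Kpow_krawtchouk[OF i p(1) y] mult.assoc)
  finally show ?thesis .
qed

lemma ehr_chi2_eq_sum_ratio:
  assumes "0 < d" "(\<Sum>j<d. p j) = 1" "\<forall>j<d. 0 < p j" "s \<le> N" "x \<in> ehr_states d N"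
  shows "ehr_chi2 d N s p x l =
    (\<Sum>y\<in>ehr_states d N. ehr_Kpow d N s p l x y * (ehr_Kpow d N s p l x y / multinom d N p y)) - 1"
proof -
  have pos: "0 < multinom d N p y" for y using assms(3) by (intro multinom_pos) auto
  have "ehr_chi2 d N s p x l = (\<Sum>y\<in>ehr_states d N.
      ehr_Kpow d N s p l x y * (ehr_Kpow d N s p l x y / multinom d N p y) -
      2 * ehr_Kpow d N s p l x y + multinom d N p y)"
    unfolding ehr_chi2_def
  proof (intro sum.cong refl)
    fix y
    have "multinom d N p y \<noteq> 0" using pos[of y] by simp
    thus "(ehr_Kpow d N s p l x y - multinom d N p y)\<^sup>2 / multinom d N p y =
        ehr_Kpow d N s p l x y * (ehr_Kpow d N s p l x y / multinom d N p y) -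
        2 * ehr_Kpow d N s p l x y + multinom d N p y"
      by (simp add: field_simps power2_eq_square)
  qed
  also have "\<dots> = (\<Sum>y\<in>ehr_states d N.
      ehr_Kpow d N s p l x y * (ehr_Kpow d N s p l x y / multinom d N p y)) - 1"
    using sum_ehr_Kpow[OF assms(1,2,4,5), of l] sum_multinom[of d N p] assms(2)
    by (simp add: sum.distrib sum_subtractf sum_distrib_left[symmetric] ehr_states_eq_compositions)
  finally show ?thesis .
qed

lemma ehr_chi2_full_urn:
  assumes i: "i < d" and p: "(\<Sum>j<d. p j) = 1" "\<forall>j<d. 0 < p j" and s: "s \<le> N"
  shows "ehr_chi2 d N s p (full_urn i N) l =
    (\<Sum>n\<le>N. of_nat (N choose n) * ((1 - p i) / p i) ^ n * ehr_eigenvalue N s n ^ (2 * l)) - 1"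
proof -
  let ?x = "full_urn i N"
  have pi: "0 < p i" using i p(2) by simp
  have ratio: "ehr_Kpow d N s p l ?x y / multinom d N p y =
      (\<Sum>n\<le>N. (1 / p i) ^ n * ehr_eigenvalue N s n ^ l * krawtchouk N (p i) n (y i))"
    if y: "y \<in> ehr_states d N" for y
  proof -
    have "multinom d N p ?x * ehr_Kpow d N s p l ?x y = multinom d N p y * ehr_Kpow d N s p l y ?x"
      by (rule ehr_Kpow_detailed_balance[OF full_urn_in_ehr_states[OF i] y])
    moreover have "0 < multinom d N p y" using p(2) by (intro multinom_pos) auto
    ultimately show ?thesis
      using pi by (simp add: multinom_full_urn[OF i] ehr_Kpow_to_full_urn[OF i p(1) _ y] field_simps)
  qed
  have "ehr_chi2 d N s p ?x l + 1 = (\<Sum>n\<le>N. (1 / p i) ^ n * ehr_eigenvalue N s n ^ l *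
      (\<Sum>y\<in>ehr_states d N. ehr_Kpow d N s p l ?x y * krawtchouk N (p i) n (y i)))"
    using i p s full_urn_in_ehr_states[OF i]
    by (simp add: ehr_chi2_eq_sum_ratio ratio sum_distrib_left sum.swap[of _ "{..N}"] mult_ac
        cong: sum.cong)
  also have "\<dots> = (\<Sum>n\<le>N. (1 / p i) ^ n * ehr_eigenvalue N s n ^ l *
      (ehr_eigenvalue N s n ^ l * krawtchouk N (p i) n N))"
    by (simp only: ehr_Kpow_krawtchouk[OF i p(1) full_urn_in_ehr_states[OF i]] full_urn_self)
  also have "\<dots> = (\<Sum>n\<le>N. of_nat (N choose n) * ((1 - p i) / p i) ^ n * ehr_eigenvalue N s n ^ (2 * l))"
    using pi unfolding mult_2 power_add by (simp add: krawtchouk_full power_divide field_simps)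
  finally show ?thesis by simp
qed

lemma prob_le_1:
  fixes p :: "nat \<Rightarrow> real"
  assumes "(\<Sum>j<d. p j) = 1" "\<forall>j<d. 0 \<le> p j" "i < d"
  shows "p i \<le> 1"
proof -
  have "p i \<le> (\<Sum>j<d. p j)" using assms(2,3) by (intro member_le_sum) auto
  thus ?thesis using assms(1) by simp
qed

lemma prob_lt_1:
  fixes p :: "nat \<Rightarrow> real"
  assumes "(\<Sum>j<d. p j) = 1" "\<forall>j<d. 0 < p j" "i < d" "j < d" "j \<noteq> i"
  shows "p i < 1"
proof -
  have "p i + p j \<le> (\<Sum>j<d. p j)"
    using assms(2-5) by (subst sum.remove[of _ i]) (auto intro!: member_le_sum)
  moreover have "0 < p j" using assms(2,4) by simp
  ultimately show ?thesis using assms(1) by linarith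
qed

lemma ehr_chi2_full_urn_le_exp:
  assumes i: "i < d" and p: "(\<Sum>j<d. p j) = 1" "\<forall>j<d. 0 < p j" and s: "1 \<le> s" "s \<le> N"
  shows "ehr_chi2 d N s p (full_urn i N) l \<le>
    exp (real N * (1 - p i) / p i * (1 - real s / real N) ^ (2 * l)) - 1"
proof -
  define r where "r = (1 - p i) / p i"
  define x where "x = r * (1 - real s / real N) ^ (2 * l)"
  have "0 < p i" "p i \<le> 1" using i p prob_le_1[of p d i] by (auto simp: less_imp_le)
  hence r: "0 \<le> r" unfolding r_def by simp
  have b: "0 \<le> 1 - real s / real N" using s by (simp add: field_simps)
  have "(\<Sum>n\<le>N. of_nat (N choose n) * r ^ n * ehr_eigenvalue N s n ^ (2 * l)) \<le>
      (\<Sum>n\<le>N. of_nat (N choose n) * x ^ n * 1 ^ (N - n))"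
  proof (intro sum_mono)
    fix n
    have "ehr_eigenvalue N s n ^ (2 * l) \<le> ((1 - real s / real N) ^ n) ^ (2 * l)"
      by (intro power_mono ehr_eigenvalue_le_power s ehr_eigenvalue_nonneg)
    moreover have "x ^ n * 1 ^ (N - n) = r ^ n * ((1 - real s / real N) ^ n) ^ (2 * l)"
      unfolding x_def by (simp add: power_mult_distrib power_mult[symmetric] mult.commute)
    ultimately show "of_nat (N choose n) * r ^ n * ehr_eigenvalue N s n ^ (2 * l) \<le>
        of_nat (N choose n) * x ^ n * 1 ^ (N - n)"
      using r by (simp add: mult.assoc mult_left_mono)
  qed
  also have "\<dots> = (x + 1) ^ N" by (rule binomial_ring[symmetric])
  also have "\<dots> \<le> exp x ^ N"
    using r b unfolding x_def by (intro power_mono) (auto simp: add.commute exp_ge_add_one_self)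
  also have "\<dots> = exp (real N * x)" by (simp add: exp_of_nat_mult)
  finally show ?thesis
    unfolding ehr_chi2_full_urn[OF i p s(2)] x_def r_def by (simp add: mult.assoc)
qed

lemma ehr_chi2_full_urn_ge:
  assumes i: "i < d" and p: "(\<Sum>j<d. p j) = 1" "\<forall>j<d. 0 < p j" and s: "s \<le> N" "1 \<le> N"
  shows "real N * (1 - p i) / p i * (1 - real s / real N) ^ (2 * l) \<le> ehr_chi2 d N s p (full_urn i N) l"
proof -
  have "0 < p i" "p i \<le> 1" using i p prob_le_1[of p d i] by (auto simp: less_imp_le)
  hence r: "0 \<le> (1 - p i) / p i" by simp
  have "(\<Sum>n\<in>{0, 1}. of_nat (N choose n) * ((1 - p i) / p i) ^ n * ehr_eigenvalue N s n ^ (2 * l)) \<le>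
      (\<Sum>n\<le>N. of_nat (N choose n) * ((1 - p i) / p i) ^ n * ehr_eigenvalue N s n ^ (2 * l))"
    using s r by (intro sum_mono2) (auto intro!: mult_nonneg_nonneg ehr_eigenvalue_nonneg)
  moreover have "ehr_eigenvalue N s (Suc 0) = 1 - real s / real N"
    using ehr_eigenvalue_1[OF s] by simp
  ultimately show ?thesis
    unfolding ehr_chi2_full_urn[OF i p s(1)] using s by (simp add: ehr_eigenvalue_0)
qed

lemma mult_power_eq_exp: "0 < K \<Longrightarrow> 0 < b \<Longrightarrow> K * b ^ n = exp (ln K + real n * ln b)"
  by (simp add: exp_add exp_of_nat_mult)

lemma mult_power_le_exp_neg:
  fixes K b c :: real
  assumes "0 < K" "0 < b" "b < 1" "(ln K + c) / (- 2 * ln b) \<le> real l"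
  shows "K * b ^ (2 * l) \<le> exp (- c)"
proof -
  have "0 < - 2 * ln b" using assms(2,3) by simp
  hence "ln K + c \<le> real l * (- 2 * ln b)" using assms(4) by (simp only: pos_divide_le_eq)
  hence "ln K + real (2 * l) * ln b \<le> - c" by (simp add: algebra_simps)
  thus ?thesis by (simp add: mult_power_eq_exp assms(1,2))
qed

lemma exp_le_mult_power:
  fixes K b c :: real
  assumes "0 < K" "0 < b" "b < 1" "real l \<le> (ln K - c) / (- 2 * ln b)"
  shows "exp c \<le> K * b ^ (2 * l)"
proof -
  have "0 < - 2 * ln b" using assms(2,3) by simp
  hence "real l * (- 2 * ln b) \<le> ln K - c" using assms(4) by (simp only: pos_le_divide_eq)
  hence "c \<le> ln K + real (2 * l) * ln b" by (simp add: algebra_simps)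
  thus ?thesis by (simp add: mult_power_eq_exp assms(1,2))
qed

theorem corollary4p25:
  fixes d N s i :: nat and p :: "nat \<Rightarrow> real" and c :: real
  assumes "d \<ge> 2" and "N \<ge> 2" and "1 \<le> s" and "s \<le> N - 1"
    and "\<forall>j<d. p j > 0" and "(\<Sum>j<d. p j) = 1"
    and "i < d" and "c > 0"
  shows "(\<forall>l::nat. real l \<ge> (ln (real N * (1 - p i) / p i) + c) / (- 2 * ln (1 - real s / real N))
            \<longrightarrow> ehr_chi2 d N s p (\<lambda>j. if j = i then N else 0) l \<le> exp (exp (- c)) - 1)
       \<and> (\<forall>l::nat. real l \<le> (ln (real N * (1 - p i) / p i) - c) / (- 2 * ln (1 - real s / real N))
            \<longrightarrow> ehr_chi2 d N s p (\<lambda>j. if j = i then N else 0) l \<ge> exp c)"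
proof -
  have "p i < 1"
    using prob_lt_1[of p d i "if i = 0 then 1 else 0"] assms(1,5-7) by auto
  hence K: "0 < real N * (1 - p i) / p i" using assms(2,5,7) by simp
  have b: "0 < 1 - real s / real N" "1 - real s / real N < 1" using assms(2-4) by (simp_all add: field_simps)
  have s: "s \<le> N" using assms(4) by simp
  note chi2_le = ehr_chi2_full_urn_le_exp[OF assms(7,6,5,3) s]
  note chi2_ge = ehr_chi2_full_urn_ge[OF assms(7,6,5) s]
  show ?thesis
    unfolding full_urn_def[symmetric]
  proof (intro conjI allI impI)
    fix l :: nat
    assume "(ln (real N * (1 - p i) / p i) + c) / (- 2 * ln (1 - real s / real N)) \<le> real l"
    from mult_power_le_exp_neg[OF K b this]
    have "exp (real N * (1 - p i) / p i * (1 - real s / real N) ^ (2 * l)) \<le> exp (exp (- c))"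
      by simp
    with chi2_le[of l] show "ehr_chi2 d N s p (full_urn i N) l \<le> exp (exp (- c)) - 1" by linarith
  next
    fix l :: nat
    assume "real l \<le> (ln (real N * (1 - p i) / p i) - c) / (- 2 * ln (1 - real s / real N))"
    from exp_le_mult_power[OF K b this] chi2_ge[of l] assms(2)
    show "exp c \<le> ehr_chi2 d N s p (full_urn i N) l" by simp
  qed
qed

end
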